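(* Let $H:\mathbb{R}^n\to\mathbb{R}$ be $\mu_H$-strongly convex with $\mu_H>0$, let $f^i_{j_i}:\mathbb{R}^n\to\mathbb{R}$ ($i\in[S]$, $j_i\in[I_i]$) be convex, and let $X\subset\mathbb{R}^n$ be nonempty, compact and convex. Let $m:=\sum_{i=1}^S I_i$, $F:=\sum_{i=1}^S\sum_{j_i=1}^{I_i} f^i_{j_i}$, and let $x^*_H$ be the unique solution of the bilevel problem: minimize $H(x)$ subject to $x\in\operatorname{argmin}_{y\in X}F(y)$. Let $\{\gamma_k\}_{k=1}^\infty$, $\{\lambda_k\}_{k=1}^\infty$ satisfy: (i) both are nonincreasing sequences of positive reals with $\gamma_1\lambda_1\mu_H\le 2m$; (ii) $\sum_{k=1}^\infty\gamma_k\lambda_k=\infty$, $\sum_{k=1}^\infty\frac{1}{\gamma_{k+1}\lambda_{k+1}}\big(1-\frac{\lambda_k}{\lambda_{k+1}}\big)^2<\infty$, and $\sum_{k=1}^\infty\gamma_k^2<\infty$; (iii) $\frac{1}{\gamma_{k+1}^2\lambda_{k+1}^2}\big(1-\frac{\lambda_k}{\lambda_{k+1}}\big)^2\to0$, $\frac{\gamma_k}{\lambda_k}\to0$, and $\lambda_k\to0$. Let $\{x_k\}_{k=1}^\infty$ be a sequence generated by FISM (described in the context) with these stepsizes. Then $\{x_k\}_{k=1}^\infty$ converges to $x^*_H$.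
   Context: Notation: $[s]:=\{1,\dots,s\}$; $P_X$ is the Euclidean metric projection onto $X$; $\partial$ denotes the convex subdifferential. FISM (Federated Incremental Subgradient Method): given a starting point $x_1\in\mathbb{R}^n$ and positive stepsizes $\{\gamma_k\},\{\lambda_k\}$, for $k=1,2,\dots$: pick $\mathcal{H}_k\in\partial H(x_k)$; for every client $i\in[S]$ set $x^i_{k,1}=x_k$ and for $j_i=1,\dots,I_i$ pick $g^i_{k,j_i}\in\partial f^i_{j_i}(x^i_{k,j_i})$ and set $x^i_{k,j_i+1}=P_X\big[x^i_{k,j_i}-\gamma_k g^i_{k,j_i}-\frac{\gamma_k\lambda_k}{m}\mathcal{H}_k\big]$; then set $x^i_k=x^i_{k,I_i+1}$ and $x_{k+1}=\frac1S\sum_{i=1}^S x^i_k$. *)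

theory Defs
  imports "HOL-Analysis.Analysis"
begin

definition strongly_convex :: "real \<Rightarrow> ('a::real_inner \<Rightarrow> real) \<Rightarrow> bool" where
  "strongly_convex \<mu> h \<longleftrightarrow>
     (\<forall>x y t. 0 \<le> t \<longrightarrow> t \<le> 1 \<longrightarrow>
        h (t *\<^sub>R x + (1 - t) *\<^sub>R y)
          \<le> t * h x + (1 - t) * h y - \<mu> / 2 * t * (1 - t) * (norm (x - y))\<^sup>2)"

definition subdiff :: "('a::real_inner \<Rightarrow> real) \<Rightarrow> 'a \<Rightarrow> 'a set" where
  "subdiff h x = {g. \<forall>y. h y \<ge> h x + g \<bullet> (y - x)}"

text \<open>FISM iterates: x (outer), y k i j (inner iterates x^i_{k,j}), g k i j (subgradients),
  Hs k (subgradients of H), all indices starting at 1.\<close>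
definition is_FISM ::
  "nat \<Rightarrow> (nat \<Rightarrow> nat) \<Rightarrow> (nat \<Rightarrow> nat \<Rightarrow> 'a::{real_inner,heine_borel} \<Rightarrow> real) \<Rightarrow> ('a \<Rightarrow> real)
   \<Rightarrow> 'a set \<Rightarrow> (nat \<Rightarrow> real) \<Rightarrow> (nat \<Rightarrow> real)
   \<Rightarrow> (nat \<Rightarrow> 'a) \<Rightarrow> (nat \<Rightarrow> 'a) \<Rightarrow> (nat \<Rightarrow> nat \<Rightarrow> nat \<Rightarrow> 'a) \<Rightarrow> (nat \<Rightarrow> nat \<Rightarrow> nat \<Rightarrow> 'a) \<Rightarrow> bool" where
  "is_FISM S I f H X \<gamma> lam x Hs y g \<longleftrightarrow>
     (let m = real (\<Sum>i=1..S. I i) in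
     (\<forall>k\<ge>1.
        Hs k \<in> subdiff H (x k) \<and>
        (\<forall>i\<in>{1..S}.
           y k i 1 = x k \<and>
           (\<forall>j\<in>{1..I i}.
              g k i j \<in> subdiff (f i j) (y k i j) \<and>
              y k i (j + 1) = closest_point X
                 (y k i j - \<gamma> k *\<^sub>R g k i j - (\<gamma> k * lam k / m) *\<^sub>R Hs k))) \<and>
        x (k + 1) = (1 / real S) *\<^sub>R (\<Sum>i=1..S. y k i (I i + 1))))"

end

theory Submission
  imports Defs
begin

(*
  Let a k = |x k - xH|^2 and D w = H w - H xH + mu/4 |w - xH|^2. Each client pass is a
  perturbed projected subgradient sweep; averaging the clients and using strong convexity of H
  on the H-subgradient term gives, once lam k is small,
    a (k + 1) <= a k - (2 gamma k / S) (F (x k) - F xH + lam k D (x k)) + C gamma k^2.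
  Far from xH (a k >= eps), compactness of X and the bilevel optimality of xH give
  F - F xH + l D >= delta l for all small l > 0, and gamma k / lam k -> 0 makes this dominate
  the error term, so a decreases there by a multiple of gamma k lam k. Since the sum of
  gamma k lam k diverges while the increments of a vanish, a k -> 0.
*)

section \<open>Strong convexity and convex functions on compact sets\<close>

lemma strongly_convex_imp_convex_on:
  assumes sc: "strongly_convex \<mu> h" and "0 \<le> \<mu>"
  shows "convex_on UNIV h"
proof (rule convex_onI)
  fix t :: real and u v assume t: "0 < t" "t < 1"
  have "h ((1 - t) *\<^sub>R u + (1 - (1 - t)) *\<^sub>R v)
      \<le> (1 - t) * h u + (1 - (1 - t)) * h v - \<mu> / 2 * (1 - t) * (1 - (1 - t)) * (norm (u - v))\<^sup>2"
    using sc[unfolded strongly_convex_def, rule_format, of "1 - t" u v] t by simp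
  moreover have "0 \<le> \<mu> / 2 * (1 - t) * (1 - (1 - t)) * (norm (u - v))\<^sup>2"
    using \<open>0 \<le> \<mu>\<close> t by simp
  ultimately show "h ((1 - t) *\<^sub>R u + t *\<^sub>R v) \<le> (1 - t) * h u + t * h v"
    by simp
qed simp

lemma strongly_convex_subdiff_ineq:
  assumes sc: "strongly_convex \<mu> h" and s: "s \<in> subdiff h u"
  shows "h u - h z + \<mu> / 4 * (norm (u - z))\<^sup>2 \<le> s \<bullet> (u - z)"
proof -
  define p where "p = (1/2) *\<^sub>R u + (1 - 1/2) *\<^sub>R z"
  have "h p \<le> 1/2 * h u + (1 - 1/2) * h z - \<mu> / 2 * (1/2) * (1 - 1/2) * (norm (u - z))\<^sup>2"
    using sc[unfolded strongly_convex_def, rule_format, of "1/2" u z] unfolding p_def by simp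
  moreover have "h u + s \<bullet> (p - u) \<le> h p"
    using s unfolding subdiff_def by blast
  moreover have "p - u = (- 1/2) *\<^sub>R (u - z)"
    unfolding p_def by (simp add: algebra_simps flip: scaleR_add_left)
  ultimately show ?thesis
    by (simp add: algebra_simps)
qed

lemma convex_on_diff_le_of_bounded_on_cball:
  fixes f :: "'a::real_normed_vector \<Rightarrow> real"
  assumes cvx: "convex_on UNIV f" and bnd: "\<forall>w\<in>cball v 1. \<bar>f w\<bar> \<le> M" and fu: "\<bar>f u\<bar> \<le> M"
  shows "f v - f u \<le> 2 * M * dist u v"
proof -
  define d where "d = dist u v"
  have fv: "\<bar>f v\<bar> \<le> M"
    using bnd by simp
  consider "1 \<le> d" | "d = 0" | "0 < d" "d < 1"
    unfolding d_def by force
  then show ?thesis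
  proof cases
    case 1
    then have "2 * M \<le> 2 * M * d"
      using fu by (simp add: mult_le_cancel_left1)
    then show ?thesis
      using fu fv unfolding d_def by linarith
  next
    case 2
    then show ?thesis
      unfolding d_def by simp
  next
    case 3
    \<comment> \<open>v is a convex combination of u and the point w at distance 1 beyond v on the ray from u\<close>
    define w where "w = v + (1 / d) *\<^sub>R (v - u)"
    define t where "t = d / (1 + d)"
    have "dist v w = 1"
      using 3 unfolding w_def d_def by (simp add: dist_norm norm_minus_commute)
    then have fw: "\<bar>f w\<bar> \<le> M"
      using bnd by simp
    have t: "0 \<le> t" "t \<le> 1"
      unfolding t_def using 3 by auto
    have td: "t / d = 1 - t"
      using 3 unfolding t_def by (simp add: divide_simps)
    have "(1 - t) *\<^sub>R u + t *\<^sub>R w = (1 - t) *\<^sub>R u + t *\<^sub>R v + (t / d) *\<^sub>R (v - u)"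
      unfolding w_def by (simp add: scaleR_add_right)
    also have "\<dots> = v"
      unfolding td by (simp add: algebra_simps)
    finally have "(1 - t) *\<^sub>R u + t *\<^sub>R w = v" .
    then have "f v \<le> (1 - t) * f u + t * f w"
      using convex_onD[OF cvx t] by force
    then have "f v - f u \<le> t * (f w - f u)"
      by (simp add: algebra_simps)
    also have "\<dots> \<le> t * (2 * M)"
      using fw fu t by (intro mult_left_mono) auto
    also have "\<dots> \<le> d * (2 * M)"
      unfolding t_def using 3 fu by (intro mult_right_mono) (auto simp: divide_simps)
    finally show ?thesis
      unfolding d_def by (simp add: mult.commute)
  qed
qed

lemma subdiff_norm_le_of_bounded_on_cball:
  fixes f :: "'a::real_inner \<Rightarrow> real"
  assumes bnd: "\<forall>w\<in>cball u 1. \<bar>f w\<bar> \<le> M" and s: "s \<in> subdiff f u"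
  shows "norm s \<le> 2 * M"
proof (cases "s = 0")
  case True
  moreover have "\<bar>f u\<bar> \<le> M"
    using bnd by simp
  ultimately show ?thesis
    by simp
next
  case False
  define w where "w = u + (1 / norm s) *\<^sub>R s"
  have "dist u w = 1"
    using False unfolding w_def by (simp add: dist_norm)
  then have "\<bar>f w\<bar> \<le> M" "\<bar>f u\<bar> \<le> M"
    using bnd by auto
  moreover have "f u + s \<bullet> (w - u) \<le> f w"
    using s unfolding subdiff_def by blast
  moreover have "s \<bullet> (w - u) = norm s"
    unfolding w_def using False by (simp add: power2_norm_eq_inner[symmetric] power2_eq_square)
  ultimately show ?thesis
    by linarith
qed

definition slope_bounded_on :: "'a::real_inner set \<Rightarrow> real \<Rightarrow> ('a \<Rightarrow> real) \<Rightarrow> bool" where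
  "slope_bounded_on X B \<phi> \<longleftrightarrow>
     (\<forall>u\<in>X. (\<forall>v\<in>X. \<phi> v - \<phi> u \<le> B * dist u v) \<and> (\<forall>s\<in>subdiff \<phi> u. norm s \<le> B))"

lemma slope_bounded_on_mono:
  assumes "slope_bounded_on X B \<phi>" and "B \<le> B'"
  shows "slope_bounded_on X B' \<phi>"
proof -
  have "B * dist u v \<le> B' * dist u v" for u v :: 'a
    using \<open>B \<le> B'\<close> by (simp add: mult_right_mono)
  then show ?thesis
    using assms unfolding slope_bounded_on_def by (meson order_trans)
qed

lemma convex_on_slope_bounded_on:
  fixes f :: "'a::euclidean_space \<Rightarrow> real"
  assumes cvx: "convex_on UNIV f" and X: "compact X"
  shows "\<exists>B. slope_bounded_on X B f"
proof -
  obtain R where R: "\<forall>x\<in>X. norm x \<le> R"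
    using compact_imp_bounded[OF X] unfolding bounded_iff by blast
  have "continuous_on (cball 0 (R + 1)) f"
    using convex_on_continuous[OF _ cvx] continuous_on_subset by blast
  then have img: "compact (f ` cball 0 (R + 1))"
    by (rule compact_continuous_image[OF _ compact_cball])
  obtain M where "\<forall>v\<in>f ` cball 0 (R + 1). norm v \<le> M"
    using compact_imp_bounded[OF img] unfolding bounded_iff by blast
  then have M: "\<forall>t\<in>cball 0 (R + 1). \<bar>f t\<bar> \<le> M"
    by (simp add: ball_simps)
  have near: "\<forall>w\<in>cball x 1. \<bar>f w\<bar> \<le> M" if "x \<in> X" for x
  proof
    fix w assume "w \<in> cball x 1"
    moreover have "norm x \<le> R"
      using R that by blast
    ultimately have "norm w \<le> R + 1"
      using norm_triangle_sub[of w x] by (simp add: dist_norm norm_minus_commute)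
    then show "\<bar>f w\<bar> \<le> M"
      using M by simp
  qed
  have "slope_bounded_on X (2 * M) f"
    unfolding slope_bounded_on_def
  proof (intro ballI conjI)
    fix u assume u: "u \<in> X"
    show "f v - f u \<le> 2 * M * dist u v" if "v \<in> X" for v
      using convex_on_diff_le_of_bounded_on_cball[OF cvx near[OF that]] near[OF u] by simp
    show "norm s \<le> 2 * M" if "s \<in> subdiff f u" for s
      using subdiff_norm_le_of_bounded_on_cball[OF near[OF u] that] .
  qed
  then show ?thesis ..
qed

lemma finite_slope_bounded_on:
  assumes "finite A" and "\<forall>a\<in>A. \<exists>B. slope_bounded_on X B (f a)"
  shows "\<exists>B. \<forall>a\<in>A. slope_bounded_on X B (f a)"
  using assms
proof (induction A rule: finite_induct)
  case empty
  then show ?case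
    by simp
next
  case (insert a A)
  then obtain B1 B2 where "slope_bounded_on X B1 (f a)" "\<forall>b\<in>A. slope_bounded_on X B2 (f b)"
    by auto
  then have "\<forall>b\<in>insert a A. slope_bounded_on X (max B1 B2) (f b)"
    using slope_bounded_on_mono by (metis insert_iff max.cobounded1 max.cobounded2)
  then show ?case ..
qed

lemma finite_convex_slope_bounded_on:
  fixes f :: "'i \<Rightarrow> 'j \<Rightarrow> 'a::euclidean_space \<Rightarrow> real"
  assumes A: "finite A" "\<forall>i\<in>A. finite (J i)" and f: "\<forall>i\<in>A. \<forall>j\<in>J i. convex_on UNIV (f i j)"
    and h: "convex_on UNIV h" and X: "compact X"
  shows "\<exists>B. (\<forall>i\<in>A. \<forall>j\<in>J i. slope_bounded_on X B (f i j)) \<and> slope_bounded_on X B h"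
proof -
  have "\<forall>p\<in>Sigma A J. \<exists>B. slope_bounded_on X B (case_prod f p)"
  proof
    fix p assume "p \<in> Sigma A J"
    then show "\<exists>B. slope_bounded_on X B (case_prod f p)"
      using f convex_on_slope_bounded_on[OF _ X] by (cases p) simp
  qed
  then obtain B1 where B1: "\<forall>p\<in>Sigma A J. slope_bounded_on X B1 (case_prod f p)"
    using finite_slope_bounded_on[OF finite_SigmaI[OF A(1)]] A(2) by blast
  obtain B2 where B2: "slope_bounded_on X B2 h"
    using convex_on_slope_bounded_on[OF h X] by blast
  have "\<forall>i\<in>A. \<forall>j\<in>J i. slope_bounded_on X (max B1 B2) (f i j)"
  proof (intro ballI)
    fix i j assume "i \<in> A" "j \<in> J i"
    then show "slope_bounded_on X (max B1 B2) (f i j)"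
      using slope_bounded_on_mono[OF B1[rule_format, of "(i, j)"]] by simp
  qed
  moreover have "slope_bounded_on X (max B1 B2) h"
    by (rule slope_bounded_on_mono[OF B2]) simp
  ultimately show ?thesis
    by blast
qed

section \<open>Projected incremental subgradient steps\<close>

lemma subdiff_le_inner:
  assumes "s \<in> subdiff \<phi> u"
  shows "\<phi> u - \<phi> z \<le> s \<bullet> (u - z)"
proof -
  have "\<phi> u + s \<bullet> (z - u) \<le> \<phi> z"
    using assms unfolding subdiff_def by blast
  then show ?thesis
    by (simp add: inner_diff_right)
qed

lemma closest_point_dist_le:
  fixes z :: "'a::euclidean_space"
  assumes "closed X" and "convex X" and "z \<in> X"
  shows "dist (closest_point X v) z \<le> dist v z"
  using closest_point_lipschitz[OF assms(2,1), of v z] closest_point_self[OF assms(3)] assms(3)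
  by auto

lemma closest_point_step_sq_dist_le:
  fixes z :: "'a::euclidean_space"
  assumes "closed X" and "convex X" and "z \<in> X"
  shows "(norm (closest_point X (u - w) - z))\<^sup>2 \<le> (norm (u - z))\<^sup>2 - 2 * (w \<bullet> (u - z)) + (norm w)\<^sup>2"
proof -
  have "norm (closest_point X (u - w) - z) \<le> norm ((u - z) - w)"
    using closest_point_dist_le[OF assms, of "u - w"] by (simp add: dist_norm algebra_simps)
  then have "(norm (closest_point X (u - w) - z))\<^sup>2 \<le> (norm ((u - z) - w))\<^sup>2"
    by (simp add: power_mono)
  also have "\<dots> = (norm (u - z))\<^sup>2 - 2 * (w \<bullet> (u - z)) + (norm w)\<^sup>2"
    by (simp add: power2_norm_eq_inner inner_diff_left inner_diff_right inner_commute)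
  finally show ?thesis .
qed

lemma incremental_step_bound:
  fixes u z xo s h :: "'a::euclidean_space"
  assumes X: "closed X" "convex X" and u: "u \<in> X" and z: "z \<in> X"
    and s: "s \<in> subdiff \<phi> u" "norm s \<le> B"
    and h: "norm h \<le> B" "D \<le> h \<bullet> (xo - z)"
    and lip: "\<phi> xo - \<phi> u \<le> B * norm (u - xo)"
    and c: "0 \<le> c" "c \<le> \<gamma>"
  defines "u' \<equiv> closest_point X (u - \<gamma> *\<^sub>R s - c *\<^sub>R h)"
  shows "norm (u' - u) \<le> 2 * B * \<gamma>"
    and "(norm (u' - z))\<^sup>2 \<le> (norm (u - z))\<^sup>2 - 2 * \<gamma> * (\<phi> xo - \<phi> z) - 2 * c * D
           + 4 * \<gamma> * B * norm (u - xo) + 4 * B\<^sup>2 * \<gamma>\<^sup>2"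
proof -
  define w where "w = \<gamma> *\<^sub>R s + c *\<^sub>R h"
  define r where "r = norm (u - xo)"
  have u'_w: "u' = closest_point X (u - w)"
    unfolding u'_def w_def by (simp add: algebra_simps)
  have B: "0 \<le> B" and \<gamma>: "0 \<le> \<gamma>"
    using h(1) c by (auto intro: order_trans[OF norm_ge_zero])
  have "norm w \<le> \<gamma> * norm s + c * norm h"
    unfolding w_def using norm_triangle_ineq[of "\<gamma> *\<^sub>R s" "c *\<^sub>R h"] \<gamma> c by simp
  also have "\<dots> \<le> \<gamma> * B + \<gamma> * B"
    using s(2) h(1) \<gamma> c B by (intro add_mono mult_mono) auto
  finally have w: "norm w \<le> 2 * B * \<gamma>"
    by simp
  show "norm (u' - u) \<le> 2 * B * \<gamma>"
    using closest_point_dist_le[OF X u, of "u - w"] w unfolding u'_w by (simp add: dist_norm)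
  have s_lower: "\<phi> xo - \<phi> z - B * r \<le> s \<bullet> (u - z)"
    using subdiff_le_inner[OF s(1), of z] lip unfolding r_def by linarith
  have "- (norm h * r) \<le> h \<bullet> (u - xo)"
    using norm_cauchy_schwarz[of "- h" "u - xo"] unfolding r_def by simp
  moreover have "norm h * r \<le> B * r"
    using h(1) unfolding r_def by (simp add: mult_right_mono)
  ultimately have h_lower: "D - B * r \<le> h \<bullet> (u - z)"
    using h(2) by (simp add: inner_diff_right algebra_simps)
  have "\<gamma> * (\<phi> xo - \<phi> z - B * r) + c * (D - B * r) \<le> w \<bullet> (u - z)"
    unfolding w_def inner_add_left inner_scaleR_left
    using s_lower h_lower \<gamma> c by (intro add_mono mult_left_mono) auto
  moreover have "c * (B * r) \<le> \<gamma> * (B * r)"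
    using c B unfolding r_def by (intro mult_right_mono) auto
  ultimately have "2 * \<gamma> * (\<phi> xo - \<phi> z) + 2 * c * D - 4 * \<gamma> * B * r \<le> 2 * (w \<bullet> (u - z))"
    by (simp add: algebra_simps)
  moreover have "(norm w)\<^sup>2 \<le> 4 * B\<^sup>2 * \<gamma>\<^sup>2"
    using power_mono[OF w norm_ge_zero, of 2] by (simp add: power_mult_distrib)
  ultimately show "(norm (u' - z))\<^sup>2 \<le> (norm (u - z))\<^sup>2 - 2 * \<gamma> * (\<phi> xo - \<phi> z) - 2 * c * D
      + 4 * \<gamma> * B * norm (u - xo) + 4 * B\<^sup>2 * \<gamma>\<^sup>2"
    using closest_point_step_sq_dist_le[OF X z, of u w] unfolding u'_w r_def by linarith
qed

lemma incremental_pass_bound: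
  fixes Y s :: "nat \<Rightarrow> 'a::euclidean_space" and \<phi> :: "nat \<Rightarrow> 'a \<Rightarrow> real"
  assumes X: "closed X" "convex X" and z: "z \<in> X" and xo: "xo \<in> X" and Y1: "Y 1 = xo"
    and step: "\<forall>j\<in>{1..n}. Y (j + 1) = closest_point X (Y j - \<gamma> *\<^sub>R s j - c *\<^sub>R h)"
    and sub: "\<forall>j\<in>{1..n}. s j \<in> subdiff (\<phi> j) (Y j)"
    and bnd: "\<forall>j\<in>{1..n}. slope_bounded_on X B (\<phi> j)"
    and h: "norm h \<le> B" "D \<le> h \<bullet> (xo - z)" and c: "0 \<le> c" "c \<le> \<gamma>"
  shows "(norm (Y (n + 1) - z))\<^sup>2 \<le> (norm (xo - z))\<^sup>2 - 2 * \<gamma> * (\<Sum>j=1..n. \<phi> j xo - \<phi> j z)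
           - 2 * c * real n * D + 4 * (real n)\<^sup>2 * B\<^sup>2 * \<gamma>\<^sup>2"
proof -
  have "0 \<le> B"
    using h(1) norm_ge_zero order_trans by blast
  then have B\<gamma>: "0 \<le> B * \<gamma>"
    using c by simp
  \<comment> \<open>The iterate Y j drifts from xo by at most 2(j - 1)B\<gamma>, so step j contributes an
     error (2j - 1) 4B^2\<gamma>^2, and these add up to 4n^2B^2\<gamma>^2.\<close>
  have "Y (j + 1) \<in> X \<and> norm (Y (j + 1) - xo) \<le> 2 * real j * B * \<gamma> \<and>
        (norm (Y (j + 1) - z))\<^sup>2 \<le> (norm (xo - z))\<^sup>2
          - (\<Sum>l=1..j. 2 * \<gamma> * (\<phi> l xo - \<phi> l z) + 2 * c * D) + 4 * (real j)\<^sup>2 * B\<^sup>2 * \<gamma>\<^sup>2"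
    if "j \<le> n" for j
    using that
  proof (induction j)
    case 0
    then show ?case
      using Y1 xo by simp
  next
    case (Suc j)
    let ?u = "Y (Suc j)"
    have j: "Suc j \<in> {1..n}"
      using Suc.prems by simp
    have IH: "?u \<in> X" "norm (?u - xo) \<le> 2 * real j * B * \<gamma>"
      "(norm (?u - z))\<^sup>2 \<le> (norm (xo - z))\<^sup>2
          - (\<Sum>l=1..j. 2 * \<gamma> * (\<phi> l xo - \<phi> l z) + 2 * c * D) + 4 * (real j)\<^sup>2 * B\<^sup>2 * \<gamma>\<^sup>2"
      using Suc by auto
    have sj: "s (Suc j) \<in> subdiff (\<phi> (Suc j)) ?u" and Ynext: "Y (Suc j + 1) = closest_point X (?u - \<gamma> *\<^sub>R s (Suc j) - c *\<^sub>R h)"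
      using sub step j by auto
    have "slope_bounded_on X B (\<phi> (Suc j))"
      using bnd j by blast
    then have "norm (s (Suc j)) \<le> B" "\<phi> (Suc j) xo - \<phi> (Suc j) ?u \<le> B * norm (?u - xo)"
      using IH(1) sj xo unfolding slope_bounded_on_def by (auto simp: dist_norm)
    note step_bound = incremental_step_bound[OF X IH(1) z sj this(1) h this(2) c, folded Ynext]
    have drift: "4 * \<gamma> * B * norm (?u - xo) \<le> 4 * \<gamma> * B * (2 * real j * B * \<gamma>)"
      by (rule mult_left_mono[OF IH(2)]) (use B\<gamma> in \<open>simp add: mult.commute\<close>)
    have "Y (Suc j + 1) \<in> X"
      using closest_point_in_set[OF X(1)] z Ynext by auto
    moreover have "norm (Y (Suc j + 1) - xo) \<le> 2 * real (Suc j) * B * \<gamma>"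
      using norm_triangle_ineq[of "Y (Suc j + 1) - ?u" "?u - xo"] step_bound(1) IH(2)
      by (simp add: algebra_simps)
    moreover have "(norm (Y (Suc j + 1) - z))\<^sup>2 \<le> (norm (xo - z))\<^sup>2
        - (\<Sum>l=1..Suc j. 2 * \<gamma> * (\<phi> l xo - \<phi> l z) + 2 * c * D) + 4 * (real (Suc j))\<^sup>2 * B\<^sup>2 * \<gamma>\<^sup>2"
      using step_bound(2) IH(3) drift by (simp add: power2_eq_square algebra_simps)
    ultimately show ?case
      by simp
  qed
  from this[of n] show ?thesis
    by (simp add: sum.distrib sum_distrib_left mult_ac)
qed

lemma norm_mean_diff_sq_le:
  fixes Y :: "'i \<Rightarrow> 'a::real_normed_vector"
  assumes "finite A" and "A \<noteq> {}"
  shows "(norm ((1 / real (card A)) *\<^sub>R (\<Sum>i\<in>A. Y i) - z))\<^sup>2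
           \<le> (1 / real (card A)) * (\<Sum>i\<in>A. (norm (Y i - z))\<^sup>2)"
proof -
  define n where "n = real (card A)"
  have n: "0 < n"
    using assms unfolding n_def by (simp add: card_gt_0_iff)
  have "(1 / n) *\<^sub>R (\<Sum>i\<in>A. Y i) - z = (1 / n) *\<^sub>R (\<Sum>i\<in>A. Y i - z)"
    using n unfolding n_def by (simp add: sum_subtractf sum_constant_scaleR scaleR_diff_right)
  then have "norm ((1 / n) *\<^sub>R (\<Sum>i\<in>A. Y i) - z) \<le> (1 / n) * (\<Sum>i\<in>A. norm (Y i - z))"
    using n norm_sum[of "\<lambda>i. Y i - z" A] by (simp add: divide_right_mono)
  then have "(norm ((1 / n) *\<^sub>R (\<Sum>i\<in>A. Y i) - z))\<^sup>2 \<le> ((1 / n) * (\<Sum>i\<in>A. norm (Y i - z)))\<^sup>2"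
    by (rule power_mono) simp
  also have "\<dots> = (1 / n)\<^sup>2 * (\<Sum>i\<in>A. norm (Y i - z))\<^sup>2"
    by (rule power_mult_distrib)
  also have "\<dots> \<le> (1 / n)\<^sup>2 * ((\<Sum>i\<in>A. (norm (Y i - z))\<^sup>2) * n)"
    using sum_squared_le_sum_of_squares[of "\<lambda>i. norm (Y i - z)" A] unfolding n_def
    by (intro mult_left_mono) auto
  also have "\<dots> = (1 / n) * (\<Sum>i\<in>A. (norm (Y i - z))\<^sup>2)"
    using n by (simp add: power2_eq_square)
  finally show ?thesis
    unfolding n_def .
qed

lemma sum_power2_le_power2_sum:
  fixes a :: "'i \<Rightarrow> real"
  assumes "finite A" and "\<forall>i\<in>A. 0 \<le> a i"
  shows "(\<Sum>i\<in>A. (a i)\<^sup>2) \<le> (\<Sum>i\<in>A. a i)\<^sup>2"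
proof -
  have "a i \<le> (\<Sum>j\<in>A. a j)" if "i \<in> A" for i
    by (rule member_le_sum) (use assms that in auto)
  then have "(\<Sum>i\<in>A. (a i)\<^sup>2) \<le> (\<Sum>i\<in>A. a i * (\<Sum>j\<in>A. a j))"
    using assms by (intro sum_mono) (simp add: power2_eq_square mult_left_mono)
  also have "\<dots> = (\<Sum>i\<in>A. a i)\<^sup>2"
    by (simp add: power2_eq_square sum_distrib_right)
  finally show ?thesis .
qed

section \<open>Convergence of penalized descent sequences\<close>

lemma descent_reaches_below:
  fixes a b :: "nat \<Rightarrow> real"
  assumes a: "\<forall>k. 0 \<le> a k" and b: "\<forall>k\<ge>K. 0 \<le> b k" and div: "\<not> summable b"
    and \<delta>: "0 < \<delta>" and descent: "\<forall>k\<ge>K. \<epsilon> \<le> a k \<longrightarrow> a (k + 1) \<le> a k - \<delta> * b k"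
  shows "\<exists>k\<ge>K. a k < \<epsilon>"
proof (rule ccontr)
  assume "\<not> ?thesis"
  then have far: "\<forall>k\<ge>K. \<epsilon> \<le> a k"
    by (auto simp: not_less)
  have partial: "a (K + n) \<le> a K - \<delta> * (\<Sum>i<n. b (i + K))" for n
  proof (induction n)
    case (Suc n)
    have "a (K + n + 1) \<le> a (K + n) - \<delta> * b (K + n)"
      using descent far by simp
    then show ?case
      using Suc by (simp add: algebra_simps)
  qed simp
  have "summable (\<lambda>i. b (i + K))"
  proof (rule summableI_nonneg_bounded)
    show "0 \<le> b (i + K)" for i
      using b by simp
    show "(\<Sum>i<n. b (i + K)) \<le> a K / \<delta>" for n
      using partial[of n] a[rule_format, of "K + n"] \<delta> by (simp add: field_simps)
  qed
  then show False
    using div by (simp add: summable_iff_shift)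
qed

lemma tendsto_zero_of_eventual_descent:
  fixes a b :: "nat \<Rightarrow> real"
  assumes a: "\<forall>k. 0 \<le> a k" and b: "\<forall>\<^sub>F k in sequentially. 0 \<le> b k" and div: "\<not> summable b"
    and descent: "\<forall>\<epsilon>>0. \<exists>\<delta>>0. \<forall>\<^sub>F k in sequentially. \<epsilon> \<le> a k \<longrightarrow> a (k + 1) \<le> a k - \<delta> * b k"
    and increase: "\<forall>\<epsilon>>0. \<forall>\<^sub>F k in sequentially. a (k + 1) \<le> a k + \<epsilon>"
  shows "a \<longlonglongrightarrow> 0"
proof (rule LIMSEQ_I)
  fix r :: real assume "0 < r"
  then have r2: "0 < r / 2"
    by simp
  obtain \<delta> where \<delta>: "0 < \<delta>"
    and far: "\<forall>\<^sub>F k in sequentially. r / 2 \<le> a k \<longrightarrow> a (k + 1) \<le> a k - \<delta> * b k"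
    using descent r2 by blast
  have "\<forall>\<^sub>F k in sequentially.
      (r / 2 \<le> a k \<longrightarrow> a (k + 1) \<le> a k - \<delta> * b k) \<and> a (k + 1) \<le> a k + r / 2 \<and> 0 \<le> b k"
    using far increase[rule_format, OF r2] b by eventually_elim blast
  then obtain K where K: "\<forall>k\<ge>K. (r / 2 \<le> a k \<longrightarrow> a (k + 1) \<le> a k - \<delta> * b k)
      \<and> a (k + 1) \<le> a k + r / 2 \<and> 0 \<le> b k"
    unfolding eventually_sequentially by blast
  obtain k0 where k0: "k0 \<ge> K" "a k0 < r / 2"
    using descent_reaches_below[OF a _ div \<delta>, of K "r / 2"] K by blast
  \<comment> \<open>below r/2 a step adds at most r/2, above r/2 the sequence decreases\<close>
  have "a (k0 + n) < r" for n
  proof (induction n)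
    case (Suc n)
    have step: "r / 2 \<le> a (k0 + n) \<longrightarrow> a (k0 + n + 1) \<le> a (k0 + n) - \<delta> * b (k0 + n)"
      "a (k0 + n + 1) \<le> a (k0 + n) + r / 2" "0 \<le> b (k0 + n)"
      using K k0(1) by (simp_all add: le_add1 order_trans[of K k0])
    have "0 \<le> \<delta> * b (k0 + n)"
      using \<delta> step(3) by simp
    then show ?case
      using Suc step(1,2) by (cases "a (k0 + n) < r / 2") (simp_all add: not_less)
  qed (use k0 a[rule_format, of k0] in simp)
  then have "\<forall>k\<ge>k0. norm (a k - 0) < r"
    using a by (metis abs_of_nonneg diff_zero le_Suc_ex real_norm_def)
  then show "\<exists>k0. \<forall>k\<ge>k0. norm (a k - 0) < r"
    by blast
qed

lemma far_low_penalty_gap: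
  fixes F D :: "'a::real_normed_vector \<Rightarrow> real"
  assumes X: "compact X" and F: "continuous_on X F" and D: "continuous_on X D"
    and D_lower: "\<forall>w\<in>X. F w \<le> F z \<longrightarrow> \<nu> * (norm (w - z))\<^sup>2 \<le> D w"
    and \<nu>: "0 \<le> \<nu>" and \<delta>: "\<delta> < \<nu> * \<epsilon>"
  shows "\<exists>\<eta>>0. \<forall>w\<in>X. \<epsilon> \<le> (norm (w - z))\<^sup>2 \<longrightarrow> D w \<le> \<delta> \<longrightarrow> F z + \<eta> \<le> F w"
proof -
  define K where "K = {w \<in> X. \<epsilon> \<le> (norm (w - z))\<^sup>2 \<and> D w \<le> \<delta>}"
  show ?thesis
  proof (cases "K = {}")
    case True
    then show ?thesis
      unfolding K_def by (intro exI[of _ 1]) auto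
  next
    case False
    have "closed {w \<in> X. \<epsilon> \<le> (norm (w - z))\<^sup>2}" "closed {w \<in> X. D w \<le> \<delta>}"
      by (intro continuous_on_closed_Collect_le continuous_intros D compact_imp_closed X)+
    moreover have "K = {w \<in> X. \<epsilon> \<le> (norm (w - z))\<^sup>2} \<inter> {w \<in> X. D w \<le> \<delta>}"
      unfolding K_def by blast
    ultimately have "closed K"
      by (simp add: closed_Int)
    then have "compact (X \<inter> K)"
      by (rule compact_Int_closed[OF X])
    moreover have "X \<inter> K = K"
      unfolding K_def by blast
    ultimately obtain w0 where w0: "w0 \<in> K" and w0_min: "\<forall>w\<in>K. F w0 \<le> F w"
      using continuous_attains_inf[OF _ False continuous_on_subset[OF F]] unfolding K_def by auto
    have w0_K: "w0 \<in> X" "\<epsilon> \<le> (norm (w0 - z))\<^sup>2" "D w0 \<le> \<delta>"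
      using w0 unfolding K_def by auto
    have "F z < F w0"
    proof (rule ccontr)
      assume "\<not> F z < F w0"
      then have "\<nu> * (norm (w0 - z))\<^sup>2 \<le> D w0"
        using D_lower w0_K(1) by simp
      moreover have "\<nu> * \<epsilon> \<le> \<nu> * (norm (w0 - z))\<^sup>2"
        using w0_K(2) \<nu> by (rule mult_left_mono)
      ultimately show False
        using w0_K(3) \<delta> by linarith
    qed
    then show ?thesis
      using w0_min unfolding K_def by (intro exI[of _ "F w0 - F z"]) auto
  qed
qed

lemma penalized_gap_lower_bound:
  fixes F D :: "'a::real_normed_vector \<Rightarrow> real"
  assumes X: "compact X" and F: "continuous_on X F" and D: "continuous_on X D"
    and z: "z \<in> X" and F_min: "\<forall>w\<in>X. F z \<le> F w"
    and D_lower: "\<forall>w\<in>X. F w \<le> F z \<longrightarrow> \<nu> * (norm (w - z))\<^sup>2 \<le> D w"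
    and \<nu>: "0 < \<nu>" and \<epsilon>: "0 < \<epsilon>"
  shows "\<exists>\<delta>>0. \<exists>l0>0. \<forall>w\<in>X. \<epsilon> \<le> (norm (w - z))\<^sup>2 \<longrightarrow>
           (\<forall>l. 0 < l \<longrightarrow> l \<le> l0 \<longrightarrow> \<delta> * l \<le> F w - F z + l * D w)"
proof -
  define \<delta> where "\<delta> = \<nu> * \<epsilon> / 2"
  have \<delta>: "0 < \<delta>" "\<delta> < \<nu> * \<epsilon>"
    unfolding \<delta>_def using \<nu> \<epsilon> by simp_all
  obtain \<eta> where \<eta>: "0 < \<eta>" and gap: "\<forall>w\<in>X. \<epsilon> \<le> (norm (w - z))\<^sup>2 \<longrightarrow> D w \<le> \<delta> \<longrightarrow> F z + \<eta> \<le> F w"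
    using far_low_penalty_gap[OF X F D D_lower _ \<delta>(2)] \<nu> by auto
  obtain M where M: "\<forall>w\<in>X. \<bar>D w\<bar> \<le> M"
    using compact_imp_bounded[OF compact_continuous_image[OF D X]] unfolding bounded_iff by auto
  then have "0 \<le> M"
    using z by force
  define l0 where "l0 = \<eta> / (M + \<delta>)"
  have l0: "0 < l0"
    unfolding l0_def using \<eta> \<open>0 \<le> M\<close> \<delta> by simp
  \<comment> \<open>where the penalty exceeds \<delta> it carries the bound, elsewhere the gap \<eta> in F does\<close>
  have "\<delta> * l \<le> F w - F z + l * D w"
    if w: "w \<in> X" "\<epsilon> \<le> (norm (w - z))\<^sup>2" and l: "0 < l" "l \<le> l0" for w l
  proof (cases "\<delta> < D w")
    case True
    then have "\<delta> * l \<le> l * D w"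
      using l mult_right_mono[of \<delta> "D w" l] by (simp add: mult.commute)
    moreover have "F z \<le> F w"
      using F_min w(1) by blast
    ultimately show ?thesis
      by linarith
  next
    case False
    then have "\<eta> \<le> F w - F z"
      using gap w by force
    moreover have "l * (M + \<delta>) \<le> \<eta>"
      using l \<open>0 \<le> M\<close> \<delta> unfolding l0_def by (simp add: field_simps)
    moreover have "- (l * M) \<le> l * D w"
      using M w(1) l(1) mult_left_mono[of "- M" "D w" l] by force
    ultimately show ?thesis
      by (simp add: algebra_simps)
  qed
  then show ?thesis
    using \<delta>(1) l0 by blast
qed

lemma penalized_recursion_increment:
  fixes x :: "nat \<Rightarrow> 'a::real_normed_vector" and F D :: "'a \<Rightarrow> real"
  assumes X: "compact X" and D: "continuous_on X D" and F_min: "\<forall>w\<in>X. F z \<le> F w"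
    and rec: "\<forall>\<^sub>F k in sequentially. x k \<in> X \<and> (norm (x (k + 1) - z))\<^sup>2 \<le> (norm (x k - z))\<^sup>2
        - \<rho> * \<gamma> k * (F (x k) - F z + lam k * D (x k)) + C * (\<gamma> k)\<^sup>2"
    and pos: "\<forall>\<^sub>F k in sequentially. 0 < \<gamma> k \<and> 0 < lam k"
    and \<gamma>: "\<gamma> \<longlonglongrightarrow> 0" and lam: "lam \<longlonglongrightarrow> 0" and \<rho>: "0 \<le> \<rho>" and \<epsilon>: "0 < \<epsilon>"
  shows "\<forall>\<^sub>F k in sequentially. (norm (x (k + 1) - z))\<^sup>2 \<le> (norm (x k - z))\<^sup>2 + \<epsilon>"
proof -
  obtain M where M: "\<forall>w\<in>X. \<bar>D w\<bar> \<le> M"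
    using compact_imp_bounded[OF compact_continuous_image[OF D X]] unfolding bounded_iff by auto
  have "(\<lambda>k. \<rho> * \<gamma> k * M + C * (\<gamma> k)\<^sup>2) \<longlonglongrightarrow> \<rho> * 0 * M + C * 0\<^sup>2"
    by (intro tendsto_intros \<gamma>)
  then have "\<forall>\<^sub>F k in sequentially. \<rho> * \<gamma> k * M + C * (\<gamma> k)\<^sup>2 < \<epsilon>"
    by (rule order_tendstoD(2)) (use \<epsilon> in simp)
  then show ?thesis
    using rec pos order_tendstoD(2)[OF lam zero_less_one]
  proof eventually_elim
    case (elim k)
    have "- M \<le> lam k * D (x k)"
      using M elim mult_left_mono[of "- M" "D (x k)" "lam k"] mult_left_le_one_le[of M "lam k"]
      by force
    then have "- M \<le> F (x k) - F z + lam k * D (x k)"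
      using elim(2) F_min by force
    then have "\<rho> * \<gamma> k * (- M) \<le> \<rho> * \<gamma> k * (F (x k) - F z + lam k * D (x k))"
      by (rule mult_left_mono) (use elim(3) \<rho> in simp)
    then show ?case
      using elim(1,2) by simp
  qed
qed

lemma penalized_recursion_descent:
  fixes x :: "nat \<Rightarrow> 'a::real_normed_vector" and F D :: "'a \<Rightarrow> real"
  assumes X: "compact X" and F: "continuous_on X F" and D: "continuous_on X D"
    and z: "z \<in> X" and F_min: "\<forall>w\<in>X. F z \<le> F w"
    and D_lower: "\<forall>w\<in>X. F w \<le> F z \<longrightarrow> \<nu> * (norm (w - z))\<^sup>2 \<le> D w" and \<nu>: "0 < \<nu>"
    and rec: "\<forall>\<^sub>F k in sequentially. x k \<in> X \<and> (norm (x (k + 1) - z))\<^sup>2 \<le> (norm (x k - z))\<^sup>2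
        - \<rho> * \<gamma> k * (F (x k) - F z + lam k * D (x k)) + C * (\<gamma> k)\<^sup>2"
    and pos: "\<forall>\<^sub>F k in sequentially. 0 < \<gamma> k \<and> 0 < lam k"
    and ratio: "(\<lambda>k. \<gamma> k / lam k) \<longlonglongrightarrow> 0" and lam: "lam \<longlonglongrightarrow> 0" and \<rho>: "0 < \<rho>" and \<epsilon>: "0 < \<epsilon>"
  shows "\<exists>\<delta>>0. \<forall>\<^sub>F k in sequentially. \<epsilon> \<le> (norm (x k - z))\<^sup>2 \<longrightarrow>
           (norm (x (k + 1) - z))\<^sup>2 \<le> (norm (x k - z))\<^sup>2 - \<delta> * (\<gamma> k * lam k)"
proof -
  obtain \<delta> l0 where \<delta>: "0 < \<delta>" "0 < l0" and gap: "\<forall>w\<in>X. \<epsilon> \<le> (norm (w - z))\<^sup>2 \<longrightarrow>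
      (\<forall>l. 0 < l \<longrightarrow> l \<le> l0 \<longrightarrow> \<delta> * l \<le> F w - F z + l * D w)"
    using penalized_gap_lower_bound[OF X F D z F_min D_lower \<nu> \<epsilon>] by blast
  have "(\<lambda>k. C * (\<gamma> k / lam k)) \<longlonglongrightarrow> C * 0"
    by (intro tendsto_intros ratio)
  then have "\<forall>\<^sub>F k in sequentially. C * (\<gamma> k / lam k) < \<rho> * \<delta> / 2"
    by (rule order_tendstoD(2)) (use \<rho> \<delta> in simp)
  then have "\<forall>\<^sub>F k in sequentially. \<epsilon> \<le> (norm (x k - z))\<^sup>2 \<longrightarrow>
      (norm (x (k + 1) - z))\<^sup>2 \<le> (norm (x k - z))\<^sup>2 - \<rho> * \<delta> / 2 * (\<gamma> k * lam k)"
    using rec pos order_tendstoD(2)[OF lam \<delta>(2)]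
  proof eventually_elim
    case (elim k)
    show ?case
    proof
      assume "\<epsilon> \<le> (norm (x k - z))\<^sup>2"
      then have "\<rho> * \<gamma> k * (\<delta> * lam k) \<le> \<rho> * \<gamma> k * (F (x k) - F z + lam k * D (x k))"
        using gap elim(2,3,4) \<rho> by (intro mult_left_mono) auto
      moreover have "C * (\<gamma> k)\<^sup>2 = C * (\<gamma> k / lam k) * (\<gamma> k * lam k)"
        using elim(3) by (simp add: power2_eq_square)
      moreover have "C * (\<gamma> k / lam k) * (\<gamma> k * lam k) \<le> \<rho> * \<delta> / 2 * (\<gamma> k * lam k)"
        using elim(1,3) by (intro mult_right_mono) auto
      ultimately show "(norm (x (k + 1) - z))\<^sup>2 \<le> (norm (x k - z))\<^sup>2 - \<rho> * \<delta> / 2 * (\<gamma> k * lam k)"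
        using elim(2) by (simp add: algebra_simps)
    qed
  qed
  then show ?thesis
    using \<rho> \<delta>(1) by (intro exI[of _ "\<rho> * \<delta> / 2"]) simp
qed

lemma bilevel_descent_tendsto:
  fixes x :: "nat \<Rightarrow> 'a::real_normed_vector" and F H :: "'a \<Rightarrow> real" and \<gamma> lam :: "nat \<Rightarrow> real"
  assumes X: "compact X" and F: "continuous_on X F" and H: "continuous_on X H"
    and z: "z \<in> X" and F_min: "\<forall>w\<in>X. F z \<le> F w" and H_min: "\<forall>w\<in>X. F w \<le> F z \<longrightarrow> H z \<le> H w"
    and \<nu>: "0 < \<nu>" and \<rho>: "0 < \<rho>"
    and pos: "\<forall>\<^sub>F k in sequentially. 0 < \<gamma> k \<and> 0 < lam k"
    and ratio: "(\<lambda>k. \<gamma> k / lam k) \<longlonglongrightarrow> 0" and lam: "lam \<longlonglongrightarrow> 0"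
    and div: "\<not> summable (\<lambda>k. \<gamma> k * lam k)"
    and rec: "\<forall>\<^sub>F k in sequentially. x k \<in> X \<and> (norm (x (k + 1) - z))\<^sup>2 \<le> (norm (x k - z))\<^sup>2
        - \<rho> * \<gamma> k * (F (x k) - F z + lam k * (H (x k) - H z + \<nu> * (norm (x k - z))\<^sup>2)) + C * (\<gamma> k)\<^sup>2"
  shows "x \<longlonglongrightarrow> z"
proof -
  define D where "D w = H w - H z + \<nu> * (norm (w - z))\<^sup>2" for w
  have D: "continuous_on X D"
    unfolding D_def by (intro continuous_intros H)
  have D_lower: "\<forall>w\<in>X. F w \<le> F z \<longrightarrow> \<nu> * (norm (w - z))\<^sup>2 \<le> D w"
    using H_min unfolding D_def by force
  note rec_D = rec[folded D_def]
  have "\<forall>\<^sub>F k in sequentially. \<gamma> k / lam k * lam k = \<gamma> k"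
    using pos by eventually_elim simp
  then have \<gamma>: "\<gamma> \<longlonglongrightarrow> 0"
    using tendsto_mult[OF ratio lam] by (simp add: tendsto_cong)
  have "\<forall>\<^sub>F k in sequentially. 0 \<le> \<gamma> k * lam k"
    using pos by eventually_elim simp
  moreover have "\<forall>\<epsilon>>0. \<exists>\<delta>>0. \<forall>\<^sub>F k in sequentially. \<epsilon> \<le> (norm (x k - z))\<^sup>2 \<longrightarrow>
      (norm (x (k + 1) - z))\<^sup>2 \<le> (norm (x k - z))\<^sup>2 - \<delta> * (\<gamma> k * lam k)"
    using penalized_recursion_descent[OF X F D z F_min D_lower \<nu> rec_D pos ratio lam \<rho>] by blast
  moreover have "\<forall>\<epsilon>>0. \<forall>\<^sub>F k in sequentially. (norm (x (k + 1) - z))\<^sup>2 \<le> (norm (x k - z))\<^sup>2 + \<epsilon>"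
    using penalized_recursion_increment[OF X D F_min rec_D pos \<gamma> lam] \<rho> by simp
  ultimately have "(\<lambda>k. (norm (x k - z))\<^sup>2) \<longlonglongrightarrow> 0"
    by (intro tendsto_zero_of_eventual_descent[OF _ _ div]) simp_all
  then have "(\<lambda>k. norm (x k - z)) \<longlonglongrightarrow> 0"
    using tendsto_real_sqrt by force
  then show ?thesis
    by (simp add: tendsto_norm_zero_iff LIM_zero_iff)
qed

section \<open>The FISM iterates\<close>

lemma is_FISM_stepD:
  assumes "is_FISM S I f H X \<gamma> lam x Hs y g" and "1 \<le> k"
  shows "Hs k \<in> subdiff H (x k)"
    and "x (k + 1) = (1 / real S) *\<^sub>R (\<Sum>i=1..S. y k i (I i + 1))"
    and "i \<in> {1..S} \<Longrightarrow> y k i 1 = x k"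
    and "i \<in> {1..S} \<Longrightarrow> \<forall>j\<in>{1..I i}. g k i j \<in> subdiff (f i j) (y k i j)"
    and "i \<in> {1..S} \<Longrightarrow> \<forall>j\<in>{1..I i}. y k i (j + 1) = closest_point X
           (y k i j - \<gamma> k *\<^sub>R g k i j - (\<gamma> k * lam k / real (\<Sum>l=1..S. I l)) *\<^sub>R Hs k)"
  using assms unfolding is_FISM_def Let_def by auto

lemma is_FISM_in_set:
  assumes fism: "is_FISM S I f H X \<gamma> lam x Hs y g" and X: "closed X" "convex X" "X \<noteq> {}"
    and S: "1 \<le> S" and I: "\<forall>i\<in>{1..S}. 1 \<le> I i" and k: "1 \<le> k"
  shows "x (k + 1) \<in> X"
proof -
  have "y k i (I i + 1) \<in> X" if "i \<in> {1..S}" for i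
    using is_FISM_stepD(5)[OF fism k that] I that closest_point_in_set[OF X(1,3)] by force
  then have "(\<Sum>i=1..S. (1 / real S) *\<^sub>R y k i (I i + 1)) \<in> X"
    using S by (intro convex_sum[OF _ X(2)]) auto
  then show ?thesis
    using is_FISM_stepD(2)[OF fism k] by (simp add: scaleR_sum_right)
qed

lemma is_FISM_descent:
  fixes x :: "nat \<Rightarrow> 'a::euclidean_space"
  assumes fism: "is_FISM S I f H X \<gamma> lam x Hs y g" and X: "closed X" "convex X" and S: "1 \<le> S"
    and H: "strongly_convex \<mu> H"
    and f_bnd: "\<forall>i\<in>{1..S}. \<forall>j\<in>{1..I i}. slope_bounded_on X B (f i j)"
    and H_bnd: "slope_bounded_on X B H"
    and k: "1 \<le> k" and xk: "x k \<in> X" and z: "z \<in> X"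
    and \<gamma>: "0 \<le> \<gamma> k" and lam: "0 < lam k" "lam k \<le> real (\<Sum>i=1..S. I i)"
  shows "(norm (x (k + 1) - z))\<^sup>2 \<le> (norm (x k - z))\<^sup>2
      - 2 / real S * \<gamma> k * ((\<Sum>i=1..S. \<Sum>j=1..I i. f i j (x k)) - (\<Sum>i=1..S. \<Sum>j=1..I i. f i j z)
          + lam k * (H (x k) - H z + \<mu> / 4 * (norm (x k - z))\<^sup>2))
      + 4 * B\<^sup>2 * (real (\<Sum>i=1..S. I i))\<^sup>2 / real S * (\<gamma> k)\<^sup>2"
proof -
  define m where "m = real (\<Sum>i=1..S. I i)"
  define c where "c = \<gamma> k * lam k / m"
  define DH where "DH = H (x k) - H z + \<mu> / 4 * (norm (x k - z))\<^sup>2"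
  define a where "a = (norm (x k - z))\<^sup>2"
  have m: "0 < m"
    using lam unfolding m_def by linarith
  have "lam k / m \<le> 1"
    using lam m unfolding m_def by simp
  then have c: "0 \<le> c" "c \<le> \<gamma> k"
    using \<gamma> lam m mult_left_le[of "lam k / m" "\<gamma> k"] unfolding c_def by auto
  have cm: "c * m = \<gamma> k * lam k"
    using m unfolding c_def by simp
  have Hs: "norm (Hs k) \<le> B" "DH \<le> Hs k \<bullet> (x k - z)"
    using is_FISM_stepD(1)[OF fism k] H_bnd xk strongly_convex_subdiff_ineq[OF H]
    unfolding slope_bounded_on_def DH_def by auto
  have client: "(norm (y k i (I i + 1) - z))\<^sup>2 \<le> a - 2 * \<gamma> k * (\<Sum>j=1..I i. f i j (x k) - f i j z)
      - 2 * c * real (I i) * DH + 4 * (real (I i))\<^sup>2 * B\<^sup>2 * (\<gamma> k)\<^sup>2" if i: "i \<in> {1..S}" for i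
    using incremental_pass_bound[OF X z xk is_FISM_stepD(3,5,4)[OF fism k i] bspec[OF f_bnd i] Hs
        c[unfolded c_def m_def]]
    unfolding a_def c_def m_def by simp
  have I_sq: "(\<Sum>i=1..S. (real (I i))\<^sup>2) \<le> m\<^sup>2"
    using sum_power2_le_power2_sum[of "{1..S}" "\<lambda>i. real (I i)"] unfolding m_def by simp
  have "(norm (x (k + 1) - z))\<^sup>2 \<le> 1 / real S * (\<Sum>i=1..S. (norm (y k i (I i + 1) - z))\<^sup>2)"
    using norm_mean_diff_sq_le[of "{1..S}" "\<lambda>i. y k i (I i + 1)" z] S is_FISM_stepD(2)[OF fism k] by simp
  also have "\<dots> \<le> 1 / real S * (\<Sum>i=1..S. a - 2 * \<gamma> k * (\<Sum>j=1..I i. f i j (x k) - f i j z)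
      - 2 * c * real (I i) * DH + 4 * (real (I i))\<^sup>2 * B\<^sup>2 * (\<gamma> k)\<^sup>2)"
    using client S by (intro mult_left_mono sum_mono) auto
  also have "\<dots> = a - 2 / real S * \<gamma> k * ((\<Sum>i=1..S. \<Sum>j=1..I i. f i j (x k)) - (\<Sum>i=1..S. \<Sum>j=1..I i. f i j z))
      - 2 / real S * (\<gamma> k * lam k) * DH + 4 * B\<^sup>2 / real S * (\<gamma> k)\<^sup>2 * (\<Sum>i=1..S. (real (I i))\<^sup>2)"
    using S unfolding cm[symmetric] m_def
    by (simp add: sum.distrib sum_subtractf sum_distrib_left sum_distrib_right field_simps)
  also have "\<dots> \<le> a - 2 / real S * \<gamma> k * ((\<Sum>i=1..S. \<Sum>j=1..I i. f i j (x k)) - (\<Sum>i=1..S. \<Sum>j=1..I i. f i j z))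
      - 2 / real S * (\<gamma> k * lam k) * DH + 4 * B\<^sup>2 / real S * (\<gamma> k)\<^sup>2 * m\<^sup>2"
    using I_sq by (intro add_left_mono mult_left_mono) auto
  finally show ?thesis
    unfolding a_def DH_def m_def by (simp add: algebra_simps)
qed

lemma is_FISM_eventually_descent:
  fixes x :: "nat \<Rightarrow> 'a::euclidean_space"
  assumes fism: "is_FISM S I f H X \<gamma> lam x Hs y g" and X: "closed X" "convex X" "X \<noteq> {}"
    and S: "1 \<le> S" and I: "\<forall>i\<in>{1..S}. 1 \<le> I i" and H: "strongly_convex \<mu> H"
    and f_bnd: "\<forall>i\<in>{1..S}. \<forall>j\<in>{1..I i}. slope_bounded_on X B (f i j)"
    and H_bnd: "slope_bounded_on X B H"
    and z: "z \<in> X" and pos: "\<forall>\<^sub>F k in sequentially. 0 < \<gamma> k \<and> 0 < lam k" and lam: "lam \<longlonglongrightarrow> 0"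
  shows "\<forall>\<^sub>F k in sequentially. x k \<in> X \<and> (norm (x (k + 1) - z))\<^sup>2 \<le> (norm (x k - z))\<^sup>2
      - 2 / real S * \<gamma> k * ((\<Sum>i=1..S. \<Sum>j=1..I i. f i j (x k)) - (\<Sum>i=1..S. \<Sum>j=1..I i. f i j z)
          + lam k * (H (x k) - H z + \<mu> / 4 * (norm (x k - z))\<^sup>2))
      + 4 * B\<^sup>2 * (real (\<Sum>i=1..S. I i))\<^sup>2 / real S * (\<gamma> k)\<^sup>2"
proof -
  have "I 1 \<le> (\<Sum>i=1..S. I i)"
    using S by (intro member_le_sum) auto
  moreover have "1 \<le> I 1"
    using I S by simp
  ultimately have m: "1 \<le> real (\<Sum>i=1..S. I i)"
    by linarith
  have "\<forall>\<^sub>F k in sequentially. 2 \<le> k"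
    by (rule eventually_ge_at_top)
  then show ?thesis
    using pos order_tendstoD(2)[OF lam zero_less_one]
  proof eventually_elim
    case (elim k)
    have "x (k - 1 + 1) \<in> X"
      by (rule is_FISM_in_set[OF fism X S I]) (use elim(1) in simp)
    moreover have "k - 1 + 1 = k"
      using elim(1) by simp
    ultimately have "x k \<in> X"
      by simp
    then show ?case
      using is_FISM_descent[OF fism X(1,2) S H f_bnd H_bnd _ _ z] elim m by simp
  qed
qed

theorem theorem1:
  fixes S :: nat and I :: "nat \<Rightarrow> nat"
    and f :: "nat \<Rightarrow> nat \<Rightarrow> real ^ 'n \<Rightarrow> real"
    and H :: "real ^ 'n \<Rightarrow> real" and \<mu> :: real
    and X :: "(real ^ 'n) set"
    and \<gamma> lam :: "nat \<Rightarrow> real"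
    and xH :: "real ^ 'n"
    and x :: "nat \<Rightarrow> real ^ 'n" and Hs :: "nat \<Rightarrow> real ^ 'n"
    and y g :: "nat \<Rightarrow> nat \<Rightarrow> nat \<Rightarrow> real ^ 'n"
  assumes S_pos: "S \<ge> 1" and I_pos: "\<forall>i\<in>{1..S}. I i \<ge> 1"
    and mu_pos: "\<mu> > 0" and H_sc: "strongly_convex \<mu> H"
    and f_cvx: "\<forall>i\<in>{1..S}. \<forall>j\<in>{1..I i}. convex_on UNIV (f i j)"
    and X_ne: "X \<noteq> {}" and X_cpt: "compact X" and X_cvx: "convex X"
    and xH_sol: "xH \<in> {z \<in> X. \<forall>w\<in>X. (\<Sum>i=1..S. \<Sum>j=1..I i. f i j z) \<le> (\<Sum>i=1..S. \<Sum>j=1..I i. f i j w)}"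
    and xH_opt: "\<forall>z \<in> {z \<in> X. \<forall>w\<in>X. (\<Sum>i=1..S. \<Sum>j=1..I i. f i j z) \<le> (\<Sum>i=1..S. \<Sum>j=1..I i. f i j w)}.
                   H xH \<le> H z"
    and gam_pos: "\<forall>k\<ge>1. \<gamma> k > 0" and lam_pos: "\<forall>k\<ge>1. lam k > 0"
    and gam_noninc: "\<forall>k\<ge>1. \<gamma> (k + 1) \<le> \<gamma> k"
    and lam_noninc: "\<forall>k\<ge>1. lam (k + 1) \<le> lam k"
    and init: "\<gamma> 1 * lam 1 * \<mu> \<le> 2 * real (\<Sum>i=1..S. I i)"
    and div: "\<not> summable (\<lambda>k. \<gamma> (k + 1) * lam (k + 1))"
    and sum1: "summable (\<lambda>k. 1 / (\<gamma> (k + 2) * lam (k + 2)) * (1 - lam (k + 1) / lam (k + 2))\<^sup>2)"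
    and sum2: "summable (\<lambda>k. (\<gamma> (k + 1))\<^sup>2)"
    and lim1: "(\<lambda>k. 1 / ((\<gamma> (k + 2))\<^sup>2 * (lam (k + 2))\<^sup>2) * (1 - lam (k + 1) / lam (k + 2))\<^sup>2) \<longlonglongrightarrow> 0"
    and lim2: "(\<lambda>k. \<gamma> k / lam k) \<longlonglongrightarrow> 0"
    and lim3: "lam \<longlonglongrightarrow> 0"
    and fism: "is_FISM S I f H X \<gamma> lam x Hs y g"
  shows "x \<longlonglongrightarrow> xH"
proof -
  let ?F = "\<lambda>w. \<Sum>i=1..S. \<Sum>j=1..I i. f i j w"
  have X: "closed X"
    using X_cpt by (rule compact_imp_closed)
  have H_cvx: "convex_on UNIV H"
    using strongly_convex_imp_convex_on[OF H_sc] mu_pos by simp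
  obtain B where f_bnd: "\<forall>i\<in>{1..S}. \<forall>j\<in>{1..I i}. slope_bounded_on X B (f i j)"
    and H_bnd: "slope_bounded_on X B H"
    using finite_convex_slope_bounded_on[OF _ _ f_cvx H_cvx X_cpt] by blast
  have xH: "xH \<in> X" "\<forall>w\<in>X. ?F xH \<le> ?F w"
    using xH_sol by blast+
  have H_min: "\<forall>w\<in>X. ?F w \<le> ?F xH \<longrightarrow> H xH \<le> H w"
    using xH_opt xH(2) order_trans by blast
  have pos: "\<forall>\<^sub>F k in sequentially. 0 < \<gamma> k \<and> 0 < lam k"
    using gam_pos lam_pos unfolding eventually_sequentially by blast
  have "continuous_on X (f i j)" if "i \<in> {1..S}" "j \<in> {1..I i}" for i j
    using convex_on_continuous[OF open_UNIV] f_cvx that continuous_on_subset by blast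
  then have F_cont: "continuous_on X ?F"
    by (intro continuous_on_sum) auto
  have H_cont: "continuous_on X H"
    using convex_on_continuous[OF open_UNIV H_cvx] continuous_on_subset by blast
  have div': "\<not> summable (\<lambda>k. \<gamma> k * lam k)"
    using div summable_iff_shift[of "\<lambda>k. \<gamma> k * lam k" 1] by simp
  show ?thesis
    by (rule bilevel_descent_tendsto[where \<rho> = "2 / real S" and \<nu> = "\<mu> / 4", OF X_cpt F_cont H_cont xH H_min
        _ _ pos lim2 lim3 div' is_FISM_eventually_descent[OF fism X X_cvx X_ne S_pos I_pos H_sc f_bnd H_bnd
        xH(1) pos lim3]])
      (use mu_pos S_pos in simp_all)
qed

end
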